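(* Let $G=(V,E)$ be a hypergraph and let $(X_1,\dots,X_p,W_0,Z_0)$ be a partition of $V$ for some integer $p\ge1$. Let $Q\subset V$ be a set such that \[Y_i:=X_i\setminus Q\neq\emptyset\ \ \forall i\in[p],\quad Y_{p+1}:=Q\cap Z_0\neq\emptyset,\quad Z:=Z_0\setminus Q\neq\emptyset,\quad W:=W_0\cup(Q\setminus Z_0)\neq\emptyset.\] Then $(Y_1,\dots,Y_p,Y_{p+1},W,Z)$ is a partition of $V$ and \[\sigma(Y_1,\dots,Y_{p+1},W,Z)\le\sigma(X_1,\dots,X_p,W_0,Z_0)+d(Q)-d(W_0\cap Q).\]
   Context: A hypergraph $G=(V,E)$ has finite vertex set $V$ and finite multiset $E$ of hyperedges (subsets of $V$). For $X\subseteq V$, $d(X)$ is the number of hyperedges meeting both $X$ and $V\setminus X$. For a partition $(Y_1,\dots,Y_m,W,Z)$ of $V$: $\mathrm{cost}(Y_1,\dots,Y_m,W,Z)$ is the number of hyperedges meeting at least two of its parts; $\mathrm{cost}(W,Z)$ is the number of hyperedges $e\subseteq W\cup Z$ meeting both $W$ and $Z$; $\alpha(Y_1,\dots,Y_m,W,Z)$ is the number of hyperedges meeting $Z$ and at least two of $Y_1,\dots,Y_m,W$; $\beta(Y_1,\dots,Y_m,Z)$ is the number of hyperedges disjoint from $Z$ meeting at least two of $Y_1,\dots,Y_m$; and $\sigma(Y_1,\dots,Y_m,W,Z):=\mathrm{cost}(Y_1,\dots,Y_m,W,Z)+\mathrm{cost}(W,Z)+\alpha(Y_1,\dots,Y_m,W,Z)+\beta(Y_1,\dots,Y_m,Z)$.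 *)

theory Defs
  imports Main "HOL-Library.Multiset"
begin

definition hypergraph :: "'a set \<Rightarrow> 'a set multiset \<Rightarrow> bool" where
  "hypergraph V E \<longleftrightarrow> finite V \<and> (\<forall>e \<in># E. e \<subseteq> V)"

definition is_partition :: "'a set \<Rightarrow> 'a set list \<Rightarrow> bool" where
  "is_partition V Ps \<longleftrightarrow>
     (\<Union>(set Ps) = V) \<and>
     (\<forall>i < length Ps. \<forall>j < length Ps. i \<noteq> j \<longrightarrow> Ps ! i \<inter> Ps ! j = {})"

definition dcut :: "'a set \<Rightarrow> 'a set multiset \<Rightarrow> 'a set \<Rightarrow> nat" where
  "dcut V E X = size (filter_mset (\<lambda>e. e \<inter> X \<noteq> {} \<and> e \<inter> (V - X) \<noteq> {}) E)"

definition meets_two :: "'a set \<Rightarrow> 'a set list \<Rightarrow> bool" where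
  "meets_two e Ps \<longleftrightarrow> card {i. i < length Ps \<and> e \<inter> Ps ! i \<noteq> {}} \<ge> 2"

definition cost :: "'a set multiset \<Rightarrow> 'a set list \<Rightarrow> nat" where
  "cost E Ps = size (filter_mset (\<lambda>e. meets_two e Ps) E)"

definition cost2 :: "'a set multiset \<Rightarrow> 'a set \<Rightarrow> 'a set \<Rightarrow> nat" where
  "cost2 E W Z = size (filter_mset (\<lambda>e. e \<subseteq> W \<union> Z \<and> e \<inter> W \<noteq> {} \<and> e \<inter> Z \<noteq> {}) E)"

definition alpha :: "'a set multiset \<Rightarrow> 'a set list \<Rightarrow> 'a set \<Rightarrow> 'a set \<Rightarrow> nat" where
  "alpha E Ys W Z = size (filter_mset (\<lambda>e. e \<inter> Z \<noteq> {} \<and> meets_two e (Ys @ [W])) E)"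

definition beta :: "'a set multiset \<Rightarrow> 'a set list \<Rightarrow> 'a set \<Rightarrow> nat" where
  "beta E Ys Z = size (filter_mset (\<lambda>e. e \<inter> Z = {} \<and> meets_two e Ys) E)"

definition sigma :: "'a set multiset \<Rightarrow> 'a set list \<Rightarrow> 'a set \<Rightarrow> 'a set \<Rightarrow> nat" where
  "sigma E Ys W Z = cost E (Ys @ [W, Z]) + cost2 E W Z + alpha E Ys W Z + beta E Ys Z"

end

theory Submission
  imports Defs
begin

text \<open>Both sides are sums over hyperedges, so it suffices to compare the contributions of a
  single hyperedge e. Its contribution to \<open>\<sigma>\<close> depends only on the number of parts
  \<open>Y\<^sub>i\<close> it meets and on whether it meets \<open>W\<close> and \<open>Z\<close>. Writing a, b, c for the
  numbers of parts \<open>X\<^sub>i\<close> met by \<open>e - Q\<close>, \<open>e\<close> and \<open>e \<inter> Q\<close>, we have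
  \<open>a, c \<le> b \<le> a + c\<close>, and the inequality for e becomes a finite case check on whether e
  meets \<open>W\<^sub>0 \<inter> Q\<close>, \<open>W\<^sub>0 - Q\<close>, \<open>Z\<^sub>0 \<inter> Q\<close> and \<open>Z\<^sub>0 - Q\<close>.\<close>

lemma size_filter_mset_eq_sum_of_bool:
  "size (filter_mset P M) = (\<Sum>x\<in>#M. of_bool (P x))"
  by (induction M) auto

definition disjoint_parts :: "'a set list \<Rightarrow> bool" where
  "disjoint_parts Ps \<longleftrightarrow>
     (\<forall>i < length Ps. \<forall>j < length Ps. i \<noteq> j \<longrightarrow> Ps ! i \<inter> Ps ! j = {})"

lemma is_partition_iff: "is_partition V Ps \<longleftrightarrow> \<Union>(set Ps) = V \<and> disjoint_parts Ps"
  by (simp add: is_partition_def disjoint_parts_def)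

lemma disjoint_parts_Nil [simp]: "disjoint_parts []"
  by (simp add: disjoint_parts_def)

lemma disjoint_parts_Cons [simp]:
  "disjoint_parts (P # Ps) \<longleftrightarrow> disjoint_parts Ps \<and> (\<forall>R \<in> set Ps. P \<inter> R = {})"
proof
  assume disj: "disjoint_parts (P # Ps)"
  have "Ps ! i \<inter> Ps ! j = {}" if "i < length Ps" "j < length Ps" "i \<noteq> j" for i j
    using disj that unfolding disjoint_parts_def
    by (metis Suc_inject Suc_mono length_Cons nth_Cons_Suc)
  moreover have "P \<inter> Ps ! j = {}" if "j < length Ps" for j
    using disj that unfolding disjoint_parts_def
    by (metis Suc_mono length_Cons nth_Cons_0 nth_Cons_Suc zero_less_Suc nat.distinct(1))
  ultimately show "disjoint_parts Ps \<and> (\<forall>R \<in> set Ps. P \<inter> R = {})"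
    unfolding disjoint_parts_def by (metis in_set_conv_nth)
next
  assume "disjoint_parts Ps \<and> (\<forall>R \<in> set Ps. P \<inter> R = {})"
  then show "disjoint_parts (P # Ps)"
    unfolding disjoint_parts_def
    by (auto simp: nth_Cons split: nat.split)
qed

lemma disjoint_parts_append:
  "disjoint_parts (Ps @ Rs) \<longleftrightarrow>
     disjoint_parts Ps \<and> disjoint_parts Rs \<and> (\<forall>P \<in> set Ps. \<forall>R \<in> set Rs. P \<inter> R = {})"
  by (induction Ps) auto

lemma is_partition_append_pairD:
  assumes "is_partition V (Xs @ [W, Z])"
  shows "V = \<Union>(set Xs) \<union> W \<union> Z" and "disjoint_parts Xs"
    and "\<forall>X \<in> set Xs. X \<inter> W = {}" and "\<forall>X \<in> set Xs. X \<inter> Z = {}" and "W \<inter> Z = {}"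
  using assms by (auto simp: is_partition_iff disjoint_parts_append)

lemma disjoint_parts_map_shrink:
  assumes "disjoint_parts Ps" and "\<And>X. f X \<subseteq> X"
  shows "disjoint_parts (map f Ps)"
  using assms by (induction Ps) (auto, blast)

definition num_parts_met :: "'a set \<Rightarrow> 'a set list \<Rightarrow> nat" where
  "num_parts_met e Ps = length (filter (\<lambda>P. e \<inter> P \<noteq> {}) Ps)"

lemma num_parts_met_Nil [simp]: "num_parts_met e [] = 0"
  by (simp add: num_parts_met_def)

lemma num_parts_met_Cons [simp]:
  "num_parts_met e (P # Ps) = of_bool (e \<inter> P \<noteq> {}) + num_parts_met e Ps"
  by (simp add: num_parts_met_def)

lemma num_parts_met_append [simp]:
  "num_parts_met e (Ps @ Rs) = num_parts_met e Ps + num_parts_met e Rs"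
  by (simp add: num_parts_met_def)

lemma num_parts_met_eq_0_iff: "num_parts_met e Ps = 0 \<longleftrightarrow> (\<forall>P \<in> set Ps. e \<inter> P = {})"
  by (induction Ps) auto

lemma num_parts_met_mono: "e \<subseteq> e' \<Longrightarrow> num_parts_met e Ps \<le> num_parts_met e' Ps"
  by (induction Ps) auto

lemma num_parts_met_Un_le:
  "num_parts_met (A \<union> B) Ps \<le> num_parts_met A Ps + num_parts_met B Ps"
  by (induction Ps) auto

lemma num_parts_met_map_Diff:
  "num_parts_met e (map (\<lambda>X. X - Q) Ps) = num_parts_met (e - Q) Ps"
  by (induction Ps) auto

lemma meets_two_iff_num_parts_met: "meets_two e Ps \<longleftrightarrow> 2 \<le> num_parts_met e Ps"
  by (simp add: meets_two_def num_parts_met_def length_filter_conv_card)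

definition sigma_edge :: "'a set \<Rightarrow> 'a set list \<Rightarrow> 'a set \<Rightarrow> 'a set \<Rightarrow> nat" where
  "sigma_edge e Ys W Z =
     of_bool (meets_two e (Ys @ [W, Z]))
   + of_bool (e \<subseteq> W \<union> Z \<and> e \<inter> W \<noteq> {} \<and> e \<inter> Z \<noteq> {})
   + of_bool (e \<inter> Z \<noteq> {} \<and> meets_two e (Ys @ [W]))
   + of_bool (e \<inter> Z = {} \<and> meets_two e Ys)"

lemma sigma_eq_sum_sigma_edge: "sigma E Ys W Z = (\<Sum>e\<in>#E. sigma_edge e Ys W Z)"
  by (simp add: sigma_def cost_def cost2_def alpha_def beta_def sigma_edge_def
      size_filter_mset_eq_sum_of_bool sum_mset.distrib)

lemma dcut_eq_sum: "dcut V E X = (\<Sum>e\<in>#E. of_bool (e \<inter> X \<noteq> {} \<and> e \<inter> (V - X) \<noteq> {}))"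
  by (simp add: dcut_def size_filter_mset_eq_sum_of_bool)

definition sigma_count :: "nat \<Rightarrow> bool \<Rightarrow> bool \<Rightarrow> nat" where
  "sigma_count k w z =
     of_bool (2 \<le> k + of_bool w + of_bool z) + of_bool (k = 0 \<and> w \<and> z)
   + of_bool (z \<and> 2 \<le> k + of_bool w) + of_bool (\<not> z \<and> 2 \<le> k)"

lemma sigma_edge_eq_sigma_count:
  assumes "e \<subseteq> \<Union>(set Ys) \<union> W \<union> Z" and "\<forall>Y \<in> set Ys. Y \<inter> (W \<union> Z) = {}"
  shows "sigma_edge e Ys W Z = sigma_count (num_parts_met e Ys) (e \<inter> W \<noteq> {}) (e \<inter> Z \<noteq> {})"
proof -
  have covered: "e \<subseteq> W \<union> Z \<longleftrightarrow> num_parts_met e Ys = 0"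
    using assms by (auto simp: num_parts_met_eq_0_iff) blast+
  show ?thesis
    unfolding sigma_edge_def sigma_count_def meets_two_iff_num_parts_met covered
    by (simp only: num_parts_met_append num_parts_met_Cons num_parts_met_Nil
        add_0_right add.assoc not_not)
qed

text \<open>Here a, b, c count the parts \<open>X\<^sub>i\<close> met by \<open>e - Q\<close>, \<open>e\<close>, \<open>e \<inter> Q\<close>, and wq, wn, zq, zn
  record whether e meets \<open>W\<^sub>0 \<inter> Q\<close>, \<open>W\<^sub>0 - Q\<close>, \<open>Z\<^sub>0 \<inter> Q\<close>, \<open>Z\<^sub>0 - Q\<close>.\<close>

lemma sigma_count_move_le:
  fixes a b c :: nat
  assumes "a \<le> b" "c \<le> b" "b \<le> a + c"
  shows "sigma_count (a + of_bool zq) (wq \<or> wn \<or> c \<noteq> 0) zn + of_bool (wq \<and> (wn \<or> zq \<or> zn \<or> b \<noteq> 0))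
    \<le> sigma_count b (wq \<or> wn) (zq \<or> zn) + of_bool ((wq \<or> zq \<or> c \<noteq> 0) \<and> (wn \<or> zn \<or> a \<noteq> 0))"
  using assms by (cases wq; cases wn; cases zq; cases zn; simp add: sigma_count_def; arith)

lemma sigma_edge_moved_eq_sigma_count:
  assumes part: "is_partition V (Xs @ [W0, Z0])" and eV: "e \<subseteq> V"
  shows "sigma_edge e (map (\<lambda>X. X - Q) Xs @ [Q \<inter> Z0]) (W0 \<union> (Q - Z0)) (Z0 - Q)
    = sigma_count (num_parts_met (e - Q) Xs + of_bool (e \<inter> (Q \<inter> Z0) \<noteq> {}))
        (e \<inter> (W0 \<inter> Q) \<noteq> {} \<or> e \<inter> (W0 - Q) \<noteq> {} \<or> num_parts_met (e \<inter> Q) Xs \<noteq> 0)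
        (e \<inter> (Z0 - Q) \<noteq> {})"
proof -
  note V = is_partition_append_pairD(1)[OF part]
    and XW = is_partition_append_pairD(3)[OF part]
    and XZ = is_partition_append_pairD(4)[OF part]
    and WZ = is_partition_append_pairD(5)[OF part]
  have "sigma_edge e (map (\<lambda>X. X - Q) Xs @ [Q \<inter> Z0]) (W0 \<union> (Q - Z0)) (Z0 - Q)
      = sigma_count (num_parts_met e (map (\<lambda>X. X - Q) Xs @ [Q \<inter> Z0]))
          (e \<inter> (W0 \<union> (Q - Z0)) \<noteq> {}) (e \<inter> (Z0 - Q) \<noteq> {})"
    by (rule sigma_edge_eq_sigma_count) (use eV V XW XZ WZ in auto)
  moreover have "e \<inter> (W0 \<union> (Q - Z0)) \<noteq> {}
      \<longleftrightarrow> e \<inter> (W0 \<inter> Q) \<noteq> {} \<or> e \<inter> (W0 - Q) \<noteq> {} \<or> num_parts_met (e \<inter> Q) Xs \<noteq> 0"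
    using eV V XZ by (auto simp: num_parts_met_eq_0_iff) fast
  ultimately show ?thesis
    by (simp add: num_parts_met_map_Diff)
qed

lemma sigma_edge_move_le:
  assumes part: "is_partition V (Xs @ [W0, Z0])" and eV: "e \<subseteq> V"
  shows "sigma_edge e (map (\<lambda>X. X - Q) Xs @ [Q \<inter> Z0]) (W0 \<union> (Q - Z0)) (Z0 - Q)
           + of_bool (e \<inter> (W0 \<inter> Q) \<noteq> {} \<and> e \<inter> (V - W0 \<inter> Q) \<noteq> {})
         \<le> sigma_edge e Xs W0 Z0 + of_bool (e \<inter> Q \<noteq> {} \<and> e \<inter> (V - Q) \<noteq> {})"
proof -
  note V = is_partition_append_pairD(1)[OF part]
    and XW = is_partition_append_pairD(3)[OF part]
    and XZ = is_partition_append_pairD(4)[OF part]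
    and WZ = is_partition_append_pairD(5)[OF part]
  define a where "a = num_parts_met (e - Q) Xs"
  define b where "b = num_parts_met e Xs"
  define c where "c = num_parts_met (e \<inter> Q) Xs"
  have "a \<le> b" "c \<le> b"
    by (auto simp: a_def b_def c_def intro: num_parts_met_mono)
  have "b \<le> a + c"
    using num_parts_met_Un_le[of "e - Q" "e \<inter> Q" Xs] by (simp add: a_def b_def c_def Un_Diff_Int)
  have new: "sigma_edge e (map (\<lambda>X. X - Q) Xs @ [Q \<inter> Z0]) (W0 \<union> (Q - Z0)) (Z0 - Q)
      = sigma_count (a + of_bool (e \<inter> (Q \<inter> Z0) \<noteq> {}))
          (e \<inter> (W0 \<inter> Q) \<noteq> {} \<or> e \<inter> (W0 - Q) \<noteq> {} \<or> c \<noteq> 0) (e \<inter> (Z0 - Q) \<noteq> {})"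
    unfolding a_def c_def by (rule sigma_edge_moved_eq_sigma_count[OF part eV])
  have old: "sigma_edge e Xs W0 Z0
      = sigma_count b (e \<inter> (W0 \<inter> Q) \<noteq> {} \<or> e \<inter> (W0 - Q) \<noteq> {})
          (e \<inter> (Q \<inter> Z0) \<noteq> {} \<or> e \<inter> (Z0 - Q) \<noteq> {})"
  proof -
    have "sigma_edge e Xs W0 Z0 = sigma_count b (e \<inter> W0 \<noteq> {}) (e \<inter> Z0 \<noteq> {})"
      unfolding b_def by (rule sigma_edge_eq_sigma_count) (use eV V XW XZ in auto)
    moreover have "e \<inter> W0 \<noteq> {} \<longleftrightarrow> e \<inter> (W0 \<inter> Q) \<noteq> {} \<or> e \<inter> (W0 - Q) \<noteq> {}"
      and "e \<inter> Z0 \<noteq> {} \<longleftrightarrow> e \<inter> (Q \<inter> Z0) \<noteq> {} \<or> e \<inter> (Z0 - Q) \<noteq> {}"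
      by blast+
    ultimately show ?thesis
      by simp
  qed
  have meets_Q: "e \<inter> Q \<noteq> {} \<longleftrightarrow> e \<inter> (W0 \<inter> Q) \<noteq> {} \<or> e \<inter> (Q \<inter> Z0) \<noteq> {} \<or> c \<noteq> 0"
    using eV V by (auto simp: c_def num_parts_met_eq_0_iff) fast
  have meets_V_Q: "e \<inter> (V - Q) \<noteq> {} \<longleftrightarrow> e \<inter> (W0 - Q) \<noteq> {} \<or> e \<inter> (Z0 - Q) \<noteq> {} \<or> a \<noteq> 0"
    using eV V by (auto simp: a_def num_parts_met_eq_0_iff)
  have meets_V_W0_Q: "e \<inter> (V - W0 \<inter> Q) \<noteq> {} \<longleftrightarrow>
      e \<inter> (W0 - Q) \<noteq> {} \<or> e \<inter> (Q \<inter> Z0) \<noteq> {} \<or> e \<inter> (Z0 - Q) \<noteq> {} \<or> b \<noteq> 0"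
    using eV V XW WZ by (auto simp: b_def num_parts_met_eq_0_iff) fast
  show ?thesis
    unfolding new old meets_Q meets_V_Q meets_V_W0_Q by (rule sigma_count_move_le) fact+
qed

lemma sigma_move_le:
  assumes "hypergraph V E" and "is_partition V (Xs @ [W0, Z0])"
  shows "sigma E (map (\<lambda>X. X - Q) Xs @ [Q \<inter> Z0]) (W0 \<union> (Q - Z0)) (Z0 - Q) + dcut V E (W0 \<inter> Q)
    \<le> sigma E Xs W0 Z0 + dcut V E Q"
proof -
  have "sigma E (map (\<lambda>X. X - Q) Xs @ [Q \<inter> Z0]) (W0 \<union> (Q - Z0)) (Z0 - Q) + dcut V E (W0 \<inter> Q)
      = (\<Sum>e\<in>#E. sigma_edge e (map (\<lambda>X. X - Q) Xs @ [Q \<inter> Z0]) (W0 \<union> (Q - Z0)) (Z0 - Q)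
           + of_bool (e \<inter> (W0 \<inter> Q) \<noteq> {} \<and> e \<inter> (V - W0 \<inter> Q) \<noteq> {}))"
    by (simp add: sigma_eq_sum_sigma_edge dcut_eq_sum sum_mset.distrib)
  also have "\<dots> \<le> (\<Sum>e\<in>#E. sigma_edge e Xs W0 Z0 + of_bool (e \<inter> Q \<noteq> {} \<and> e \<inter> (V - Q) \<noteq> {}))"
    using assms by (intro sum_mset_mono sigma_edge_move_le) (auto simp: hypergraph_def)
  also have "\<dots> = sigma E Xs W0 Z0 + dcut V E Q"
    by (simp add: sigma_eq_sum_sigma_edge dcut_eq_sum sum_mset.distrib)
  finally show ?thesis .
qed

lemma is_partition_move:
  assumes "is_partition V (Xs @ [W0, Z0])" and "Q \<subseteq> V"
  shows "is_partition V (map (\<lambda>X. X - Q) Xs @ [Q \<inter> Z0] @ [W0 \<union> (Q - Z0), Z0 - Q])"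
proof -
  note old_parts = is_partition_append_pairD[OF assms(1)]
  have "disjoint_parts (map (\<lambda>X. X - Q) Xs)"
    by (rule disjoint_parts_map_shrink) (use old_parts(2) in auto)
  then show ?thesis
    using old_parts assms(2) by (auto simp: is_partition_iff disjoint_parts_append)
qed

theorem lemma3p3:
  fixes V :: "'a set" and E :: "'a set multiset"
    and Xs :: "'a set list" and W0 Z0 Q :: "'a set"
  assumes "hypergraph V E"
    and "length Xs \<ge> 1"
    and "is_partition V (Xs @ [W0, Z0])"
    and "Q \<subseteq> V"
    and "\<forall>X \<in> set Xs. X - Q \<noteq> {}"
    and "Q \<inter> Z0 \<noteq> {}"
    and "Z0 - Q \<noteq> {}"
    and "W0 \<union> (Q - Z0) \<noteq> {}"
  shows "is_partition V (map (\<lambda>X. X - Q) Xs @ [Q \<inter> Z0] @ [W0 \<union> (Q - Z0), Z0 - Q])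
    \<and> int (sigma E (map (\<lambda>X. X - Q) Xs @ [Q \<inter> Z0]) (W0 \<union> (Q - Z0)) (Z0 - Q))
        \<le> int (sigma E Xs W0 Z0) + int (dcut V E Q) - int (dcut V E (W0 \<inter> Q))"
proof
  show "is_partition V (map (\<lambda>X. X - Q) Xs @ [Q \<inter> Z0] @ [W0 \<union> (Q - Z0), Z0 - Q])"
    using assms(3,4) by (rule is_partition_move)
  show "int (sigma E (map (\<lambda>X. X - Q) Xs @ [Q \<inter> Z0]) (W0 \<union> (Q - Z0)) (Z0 - Q))
      \<le> int (sigma E Xs W0 Z0) + int (dcut V E Q) - int (dcut V E (W0 \<inter> Q))"
    using sigma_move_le[OF assms(1,3), of Q] by linarith
qed

end
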